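(* Let $h_{r,d},h_{r,u}$ be independent random variables such that $|h_{r,d}|^2$ and $|h_{r,u}|^2$ are exponentially distributed with mean $1$ (density $e^{-x}$, $x>0$); put $Z=|h_{r,d}|^2|h_{r,u}|^2$. Let $\delta,T,\Xi_{r,1},d_t,\alpha_r$ be positive constants and define $R_{est}:=\frac{\delta}{2T}\,\mathbb{E}\big[\log_2(1+\Xi_{r,1}d_t^{-\alpha_r}Z)\big]$. Then $$R_{est}=\frac{\delta}{2T\ln 2}\,G^{3,1}_{1,3}\!\left(d_t^{\alpha_r}\Xi_{r,1}^{-1}\,\middle|\,\begin{matrix}0\\ 0,0,1\end{matrix}\right).$$
   Context: This is the Rayleigh ($m=1$ Nakagami) case of the ergodic radar estimation information rate: $\delta$ is the radar duty factor, $T$ the pulse duration, $d_t$ the BS–target distance, $\alpha_r$ the radar path loss exponent, and $\Xi_{r,1}d_t^{-\alpha_r}Z$ plays the role of $2T\beta_{semi}B\gamma_r^{echo}$ in the rate bound $\frac{\delta}{2T}\log_2(1+2T\beta_{semi}B\gamma_r^{echo})$. $G^{m,n}_{p,q}\!\left(x\,\middle|\,\begin{matrix}a_1,\dots,a_p\\ b_1,\dots,b_q\end{matrix}\right)$ denotes the Meijer G-function. *)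

theory Defs
  imports "HOL-Probability.Probability"
begin

text \<open>Meijer G-function, via its Mellin--Barnes integral along a vertical line
  Re s = c which separates the poles of the Gamma(b_j - s), j < m (lying to the right)
  from the poles of the Gamma(1 - a_k + s), k < n (lying to the left).
  With s = c + i t we have ds = i dt, hence (1/(2 pi i)) int_L ... ds = (1/(2 pi)) int ... dt.\<close>

definition meijerG_integrand ::
  "nat \<Rightarrow> nat \<Rightarrow> complex list \<Rightarrow> complex list \<Rightarrow> real \<Rightarrow> complex \<Rightarrow> complex" where
  "meijerG_integrand m n as bs x s =
     ((\<Prod>j<m. Gamma (bs ! j - s)) * (\<Prod>k<n. Gamma (1 - as ! k + s)))
     / ((\<Prod>j\<in>{m..<length bs}. Gamma (1 - bs ! j + s)) * (\<Prod>k\<in>{n..<length as}. Gamma (as ! k - s)))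
     * (complex_of_real x powr s)"

definition meijerG_line ::
  "real \<Rightarrow> nat \<Rightarrow> nat \<Rightarrow> complex list \<Rightarrow> complex list \<Rightarrow> real \<Rightarrow> complex" where
  "meijerG_line c m n as bs x =
     complex_of_real (1 / (2 * pi)) *
       (\<integral>t. meijerG_integrand m n as bs x (Complex c t) \<partial>lborel)"

definition separating_line :: "real \<Rightarrow> nat \<Rightarrow> nat \<Rightarrow> complex list \<Rightarrow> complex list \<Rightarrow> bool" where
  "separating_line c m n as bs \<longleftrightarrow>
     (\<forall>j<m. c < Re (bs ! j)) \<and> (\<forall>k<n. Re (as ! k) - 1 < c)"

text \<open>G^{m,n}_{p,q}(x | as; bs) with p = length as, q = length bs.\<close>
definition meijerG :: "nat \<Rightarrow> nat \<Rightarrow> complex list \<Rightarrow> complex list \<Rightarrow> real \<Rightarrow> complex" where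
  "meijerG m n as bs x =
     meijerG_line (SOME c. separating_line c m n as bs) m n as bs x"

end

(*
  By the reflection formula Gamma(-s) Gamma(1+s) = -pi / sin(pi s), the Mellin-Barnes integrand
  of G^{3,1}_{1,3}(x | 0; 0,0,1) on a line Re s = c with -1 < c < 0 equals
  -pi x^s / sin(pi s) * Gamma(-s) * Gamma(1-s). Writing both Gamma factors as Euler integrals
  over u and v and exchanging the order of integration leaves the line integral of
  e^(sL) / sin(pi s) with L = ln (x / (u v)). The residue theorem on the rectangle
  [c, c+1] x [-R, R] evaluates it to -2 / (1 + e^L): the two vertical sides differ by the
  factor -e^L, the only pole is s = 0 with residue 1/pi, and the horizontal sides vanish as R
  grows. Hence G(x) equals the double integral of e^(-u-v) v / (u v + x) over u, v > 0.

  For independent unit exponentials X and Y, integrating by parts in Y against the exponential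
  tail turns E ln(1 + X Y / x) into the same double integral; with x = d_t^alpha_r / Xi this
  is the expectation in R_est, up to the factor delta / (2 T ln 2).
*)

theory Submission
  imports Defs "HOL-Complex_Analysis.Complex_Analysis"
begin

section \<open>The kernel e^(sL) / sin(pi s) on a vertical line\<close>

lemma norm_sin_Complex_squared:
  "(norm (sin (Complex x y)))\<^sup>2 = (sin x)\<^sup>2 + (sinh y)\<^sup>2"
proof -
  have "(norm (sin (Complex x y)))\<^sup>2 = (sin x * cosh y)\<^sup>2 + (cos x * sinh y)\<^sup>2"
    by (simp add: cmod_power2 Re_sin Im_sin cosh_def sinh_def)
  also have "\<dots> = (sin x)\<^sup>2 * ((sinh y)\<^sup>2 + 1) + (cos x)\<^sup>2 * (sinh y)\<^sup>2"
    by (simp add: power_mult_distrib cosh_square_eq)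
  also have "\<dots> = (sin x)\<^sup>2 + ((sin x)\<^sup>2 + (cos x)\<^sup>2) * (sinh y)\<^sup>2"
    by algebra
  also have "\<dots> = (sin x)\<^sup>2 + (sinh y)\<^sup>2"
    by simp
  finally show ?thesis .
qed

lemma abs_sinh_le_norm_sin_Complex: "\<bar>sinh y\<bar> \<le> norm (sin (Complex x y))"
  by (rule power2_le_imp_le) (simp_all add: norm_sin_Complex_squared)

lemma abs_sin_mult_cosh_le_norm_sin_Complex: "\<bar>sin x\<bar> * cosh y \<le> norm (sin (Complex x y))"
proof (rule power2_le_imp_le)
  have "(sin x)\<^sup>2 * (sinh y)\<^sup>2 \<le> (sinh y)\<^sup>2"
    using abs_sin_le_one[of x] by (intro mult_left_le_one_le) (auto simp: abs_square_le_1)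
  then show "(\<bar>sin x\<bar> * cosh y)\<^sup>2 \<le> (norm (sin (Complex x y)))\<^sup>2"
    by (simp add: norm_sin_Complex_squared power_mult_distrib cosh_square_eq algebra_simps)
qed simp

lemma one_plus_square_le_two_cosh_pi: "1 + t\<^sup>2 \<le> 2 * cosh (pi * t)"
proof -
  have "2 \<le> pi\<^sup>2"
    using power_mono[OF pi_ge_two, of 2] by simp
  then have "2 * t\<^sup>2 \<le> (pi * t)\<^sup>2"
    unfolding power_mult_distrib by (rule mult_right_mono) simp
  then have "1 + t\<^sup>2 \<le> 1 + \<bar>pi * t\<bar> + (pi * t)\<^sup>2 / 2"
    by simp
  also have "\<dots> \<le> exp \<bar>pi * t\<bar>"
    using exp_lower_Taylor_quadratic[of "\<bar>pi * t\<bar>"] by simp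
  also have "\<dots> \<le> 2 * cosh (pi * t)"
    by (cases "pi * t \<ge> 0") (auto simp: cosh_def)
  finally show ?thesis .
qed

lemma integrable_inverse_one_plus_square: "integrable lborel (\<lambda>t::real. inverse (1 + t\<^sup>2))"
  using integrable_inverse_1_plus_square by (simp add: set_integrable_def)

definition exp_div_sin_pi :: "real \<Rightarrow> complex \<Rightarrow> complex" where
  "exp_div_sin_pi L s = exp (s * of_real L) / sin (of_real pi * s)"

lemma exp_div_sin_pi_add_one: "exp_div_sin_pi L (s + 1) = - of_real (exp L) * exp_div_sin_pi L s"
proof -
  have "sin (of_real pi * (s + 1)) = - sin (of_real pi * s)"
    by (simp add: distrib_left sin_add flip: sin_of_real cos_of_real)
  moreover have "exp ((s + 1) * of_real L) = exp (s * of_real L) * of_real (exp L)"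
    by (simp add: distrib_right exp_add flip: exp_of_real)
  ultimately show ?thesis
    unfolding exp_div_sin_pi_def by simp
qed

lemma pi_times_Complex: "of_real pi * Complex x y = Complex (pi * x) (pi * y)"
  by (simp add: complex_eq_iff)

lemma sin_pi_times_eq_0_iff: "sin (of_real pi * s) = 0 \<longleftrightarrow> (s::complex) \<in> \<int>"
proof
  assume "sin (of_real pi * s) = 0"
  then obtain n :: int where "of_real pi * s = of_real (of_int n * pi)"
    by (metis sin_eq_0)
  then have "s = of_int n"
    by (simp add: field_simps)
  then show "s \<in> \<int>" by simp
next
  assume "s \<in> \<int>"
  then obtain n :: int where "s = of_int n"
    by (rule Ints_cases)
  then have "of_real pi * s = of_real (pi * of_int n)"
    by simp
  then show "sin (of_real pi * s) = 0"
    by (simp only: sin_of_real sin_npi_int of_real_0)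
qed

lemma sin_pi_neq_0_of_strip: "-1 < c \<Longrightarrow> c < 0 \<Longrightarrow> sin (pi * c) \<noteq> 0"
  by (auto simp: mult.commute[of pi] sin_times_pi_eq_0 elim!: Ints_cases)

lemma exp_div_sin_pi_holomorphic: "exp_div_sin_pi L holomorphic_on - \<int>"
  unfolding exp_div_sin_pi_def by (intro holomorphic_intros) (auto simp: sin_pi_times_eq_0_iff)

lemma residue_exp_div_sin_pi_0: "residue (exp_div_sin_pi L) 0 = 1 / of_real pi"
proof -
  have "residue (\<lambda>w. exp (w * of_real L) / sin (of_real pi * w)) 0 = exp (0 * of_real L) / of_real pi"
    by (rule residue_simple_pole_deriv[where s=UNIV])
       (auto intro!: holomorphic_intros derivative_eq_intros)
  then show ?thesis
    by (simp add: exp_div_sin_pi_def[abs_def])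
qed

lemma abs_sin_mult_cosh_pos:
  assumes "sin (pi * c) \<noteq> 0"
  shows "0 < \<bar>sin (pi * c)\<bar> * cosh (pi * t)"
  using assms cosh_real_ge_1[of "pi * t"] by (intro mult_pos_pos) auto

lemma norm_exp_div_sin_pi_vertical_le:
  assumes "sin (pi * c) \<noteq> 0"
  shows "norm (exp_div_sin_pi L (Complex c t))
           \<le> 2 * exp (c * L) / \<bar>sin (pi * c)\<bar> * inverse (1 + t\<^sup>2)"
proof -
  note pos = abs_sin_mult_cosh_pos[OF assms, of t]
  have "norm (exp_div_sin_pi L (Complex c t)) = exp (c * L) / norm (sin (Complex (pi * c) (pi * t)))"
    unfolding exp_div_sin_pi_def pi_times_Complex by (simp add: norm_divide)
  also have "\<dots> \<le> exp (c * L) / (\<bar>sin (pi * c)\<bar> * cosh (pi * t))"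
    using pos abs_sin_mult_cosh_le_norm_sin_Complex[of "pi * c" "pi * t"]
    by (intro divide_left_mono mult_pos_pos) auto
  also have "\<dots> \<le> exp (c * L) / (\<bar>sin (pi * c)\<bar> * ((1 + t\<^sup>2) / 2))"
    using assms one_plus_square_le_two_cosh_pi[of t]
    by (intro divide_left_mono mult_left_mono mult_pos_pos) (auto intro: add_pos_nonneg)
  also have "\<dots> = 2 * exp (c * L) / \<bar>sin (pi * c)\<bar> * inverse (1 + t\<^sup>2)"
    by (simp add: field_simps)
  finally show ?thesis .
qed

lemma continuous_on_exp_div_sin_pi_vertical:
  assumes "sin (pi * c) \<noteq> 0"
  shows "continuous_on UNIV (\<lambda>t. exp_div_sin_pi L (Complex c t))"
proof (rule continuous_on_compose2[OF holomorphic_on_imp_continuous_on[OF exp_div_sin_pi_holomorphic]])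
  show "continuous_on UNIV (Complex c)"
    by (simp add: Complex_eq continuous_intros)
  have "sin (of_real pi * Complex c t) \<noteq> 0" for t
    using abs_sin_mult_cosh_pos[OF assms, of t]
      abs_sin_mult_cosh_le_norm_sin_Complex[of "pi * c" "pi * t"]
    by (auto simp: pi_times_Complex)
  then show "range (Complex c) \<subseteq> - \<int>"
    by (auto simp: sin_pi_times_eq_0_iff)
qed

lemma integrable_exp_div_sin_pi_vertical:
  assumes "sin (pi * c) \<noteq> 0"
  shows "integrable lborel (\<lambda>t. exp_div_sin_pi L (Complex c t))"
proof (rule Bochner_Integration.integrable_bound)
  show "integrable lborel (\<lambda>t. 2 * exp (c * L) / \<bar>sin (pi * c)\<bar> * inverse (1 + t\<^sup>2))"
    by (intro integrable_mult_right integrable_inverse_one_plus_square)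
  show "(\<lambda>t. exp_div_sin_pi L (Complex c t)) \<in> borel_measurable lborel"
    using continuous_on_exp_div_sin_pi_vertical[OF assms] by (simp add: borel_measurable_continuous_onI)
  show "AE t in lborel. norm (exp_div_sin_pi L (Complex c t))
          \<le> norm (2 * exp (c * L) / \<bar>sin (pi * c)\<bar> * inverse (1 + t\<^sup>2))"
    using norm_exp_div_sin_pi_vertical_le[OF assms] by (intro AE_I2) (simp add: add_pos_nonneg)
qed

lemma norm_exp_div_sin_pi_horizontal_le:
  assumes "\<bar>x\<bar> \<le> 1" "y \<noteq> 0"
  shows "norm (exp_div_sin_pi L (Complex x y)) \<le> exp \<bar>L\<bar> / \<bar>sinh (pi * y)\<bar>"
proof -
  have "norm (exp_div_sin_pi L (Complex x y)) = exp (x * L) / norm (sin (Complex (pi * x) (pi * y)))"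
    unfolding exp_div_sin_pi_def pi_times_Complex by (simp add: norm_divide)
  also have "\<dots> \<le> exp \<bar>L\<bar> / \<bar>sinh (pi * y)\<bar>"
  proof (rule frac_le)
    have "x * L \<le> \<bar>x\<bar> * \<bar>L\<bar>"
      by (metis abs_ge_self abs_mult)
    also have "\<dots> \<le> \<bar>L\<bar>"
      using assms(1) by (simp add: mult_left_le_one_le)
    finally show "exp (x * L) \<le> exp \<bar>L\<bar>" by simp
    show "0 < \<bar>sinh (pi * y)\<bar>"
      using assms(2) by simp
  qed (simp_all add: abs_sinh_le_norm_sin_Complex)
  finally show ?thesis .
qed

lemma contour_integral_rectpath_eq_sum_edges:
  fixes a1 a3 :: complex
  defines "a2 \<equiv> Complex (Re a3) (Im a1)" and "a4 \<equiv> Complex (Re a1) (Im a3)"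
  assumes "continuous_on (path_image (rectpath a1 a3)) f"
  shows "contour_integral (rectpath a1 a3) f =
           contour_integral (linepath a1 a2) f + contour_integral (linepath a2 a3) f
         + contour_integral (linepath a3 a4) f + contour_integral (linepath a4 a1) f"
proof -
  have image: "path_image (rectpath a1 a3) =
      closed_segment a1 a2 \<union> closed_segment a2 a3 \<union> closed_segment a3 a4 \<union> closed_segment a4 a1"
    by (simp add: rectpath_def Let_def path_image_join a2_def a4_def Un_assoc)
  have integrable: "f contour_integrable_on linepath a b"
    if "closed_segment a b \<subseteq> path_image (rectpath a1 a3)" for a b
    using that assms(3) by (intro contour_integrable_continuous_linepath) (rule continuous_on_subset)
  have "f contour_integrable_on linepath a1 a2" "f contour_integrable_on linepath a2 a3"
       "f contour_integrable_on linepath a3 a4" "f contour_integrable_on linepath a4 a1"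
    by (auto intro!: integrable simp: image)
  then show ?thesis
    by (simp add: rectpath_def Let_def a2_def [symmetric] a4_def [symmetric]
                  contour_integrable_joinI contour_integral_join)
qed

lemma exp_div_sin_pi_holomorphic_on_strip:
  "exp_div_sin_pi L holomorphic_on {z. -1 < Re z \<and> Re z < 1} - {0}"
  using exp_div_sin_pi_holomorphic by (rule holomorphic_on_subset) (auto elim!: Ints_cases)

lemma contour_integral_exp_div_sin_pi_rectpath:
  assumes "-1 < c" "c < 0" "0 < R"
  shows "contour_integral (rectpath (Complex c (-R)) (Complex (c + 1) R)) (exp_div_sin_pi L) = 2 * \<i>"
proof -
  define S where "S = {z. -1 < Re z \<and> Re z < 1}"
  define a1 a3 where "a1 = Complex c (-R)" and "a3 = Complex (c + 1) R"
  have pole_inside: "0 \<in> box a1 a3"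
    using assms by (auto simp: in_box_complex_iff a1_def a3_def)
  have rectangle: "cbox a1 a3 \<subseteq> S"
    using assms by (auto simp: in_cbox_complex_iff S_def a1_def a3_def)
  have le: "Re a1 \<le> Re a3" "Im a1 \<le> Im a3"
    using assms by (auto simp: a1_def a3_def)
  have "contour_integral (rectpath a1 a3) (exp_div_sin_pi L) =
        2 * pi * \<i> * (\<Sum>p\<in>{0}. winding_number (rectpath a1 a3) p * residue (exp_div_sin_pi L) p)"
  proof (rule Residue_theorem[where S = S])
    have "S = {z. -1 < Re z} \<inter> {z. Re z < 1}"
      by (auto simp: S_def)
    then show "open S" "connected S"
      by (simp_all add: open_Int open_halfspace_Re_gt open_halfspace_Re_lt convex_connected
                        convex_Int convex_halfspace_Re_gt convex_halfspace_Re_lt)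
    show "exp_div_sin_pi L holomorphic_on S - {0}"
      unfolding S_def by (rule exp_div_sin_pi_holomorphic_on_strip)
    show "path_image (rectpath a1 a3) \<subseteq> S - {0}"
      using path_image_rectpath_cbox_minus_box[OF le] pole_inside rectangle by auto
    show "\<forall>z. z \<notin> S \<longrightarrow> winding_number (rectpath a1 a3) z = 0"
      using winding_number_rectpath_outside[OF le] rectangle by auto
  qed auto
  also have "\<dots> = 2 * \<i>"
    using winding_number_rectpath[OF pole_inside] by (simp add: residue_exp_div_sin_pi_0)
  finally show ?thesis
    unfolding a1_def a3_def .
qed

lemma contour_integral_exp_div_sin_pi_shifted_line:
  assumes "0 < R"
  shows "contour_integral (linepath (Complex (c + 1) (-R)) (Complex (c + 1) R)) (exp_div_sin_pi L)
           = - \<i> * of_real (exp L) * integral {-R..R} (\<lambda>t. exp_div_sin_pi L (Complex c t))"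
proof -
  have "contour_integral (linepath (Complex (c + 1) (-R)) (Complex (c + 1) R)) (exp_div_sin_pi L)
      = \<i> * integral {-R..R} (\<lambda>t. exp_div_sin_pi L (Complex (c + 1) t))"
    using assms by (intro contour_integral_linepath_same_Re) auto
  also have "(\<lambda>t. exp_div_sin_pi L (Complex (c + 1) t))
      = (\<lambda>t. - of_real (exp L) * exp_div_sin_pi L (Complex c t))"
  proof
    fix t
    have "Complex (c + 1) t = Complex c t + 1"
      by (simp add: complex_eq_iff)
    then show "exp_div_sin_pi L (Complex (c + 1) t) = - of_real (exp L) * exp_div_sin_pi L (Complex c t)"
      by (simp only: exp_div_sin_pi_add_one)
  qed
  also have "integral {-R..R} (\<lambda>t. - of_real (exp L) * exp_div_sin_pi L (Complex c t))
      = - of_real (exp L) * integral {-R..R} (\<lambda>t. exp_div_sin_pi L (Complex c t))"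
    by (rule integral_mult_right)
  finally show ?thesis
    by (metis mult.assoc mult_minus_left mult_minus_right)
qed

lemma exp_div_sin_pi_rectpath_decomposition:
  fixes c R L :: real
  assumes "-1 < c" "c < 0" "0 < R"
  defines "H y \<equiv> contour_integral (linepath (Complex c y) (Complex (c + 1) y)) (exp_div_sin_pi L)"
  shows "2 * \<i> = H (-R) - H R
           - \<i> * (1 + of_real (exp L)) * integral {-R..R} (\<lambda>t. exp_div_sin_pi L (Complex c t))"
proof -
  define J where "J = integral {-R..R} (\<lambda>t. exp_div_sin_pi L (Complex c t))"
  define a1 a2 a3 a4 where "a1 = Complex c (-R)" and "a2 = Complex (c + 1) (-R)"
    and "a3 = Complex (c + 1) R" and "a4 = Complex c R"
  have le: "Re a1 \<le> Re a3" "Im a1 \<le> Im a3"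
    using assms by (auto simp: a1_def a3_def)
  have "path_image (rectpath a1 a3) \<subseteq> {z. -1 < Re z \<and> Re z < 1} - {0}"
    using assms unfolding path_image_rectpath_cbox_minus_box[OF le]
    by (auto simp: in_cbox_complex_iff in_box_complex_iff a1_def a3_def)
  then have continuous: "continuous_on (path_image (rectpath a1 a3)) (exp_div_sin_pi L)"
    by (intro holomorphic_on_imp_continuous_on holomorphic_on_subset[OF exp_div_sin_pi_holomorphic_on_strip])
  have reverse: "contour_integral (linepath a b) (exp_div_sin_pi L)
      = - contour_integral (linepath b a) (exp_div_sin_pi L)"
    if "closed_segment a b \<subseteq> path_image (rectpath a1 a3)" for a b
    using continuous that by (intro contour_integral_reverse_linepath) (rule continuous_on_subset)
  have edges: "closed_segment a3 a4 \<subseteq> path_image (rectpath a1 a3)"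
    "closed_segment a4 a1 \<subseteq> path_image (rectpath a1 a3)"
    by (auto simp: rectpath_def Let_def path_image_join a1_def a3_def a4_def)
  have "contour_integral (linepath a1 a4) (exp_div_sin_pi L) = \<i> * J"
    using assms unfolding J_def by (intro contour_integral_linepath_same_Re) (auto simp: a1_def a4_def)
  then have left: "contour_integral (linepath a4 a1) (exp_div_sin_pi L) = - \<i> * J"
    using reverse[OF edges(2)] by simp
  have top: "contour_integral (linepath a3 a4) (exp_div_sin_pi L) = - H R"
    using reverse[OF edges(1)] by (simp add: H_def a3_def a4_def)
  have right: "contour_integral (linepath a2 a3) (exp_div_sin_pi L) = - \<i> * of_real (exp L) * J"
    unfolding a2_def a3_def J_def using assms(3) by (rule contour_integral_exp_div_sin_pi_shifted_line)
  have "2 * \<i> = contour_integral (rectpath a1 a3) (exp_div_sin_pi L)"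
    using contour_integral_exp_div_sin_pi_rectpath[OF assms(1-3)] by (simp add: a1_def a3_def)
  also have "\<dots> = H (-R) - H R - \<i> * (1 + of_real (exp L)) * J"
    using contour_integral_rectpath_eq_sum_edges[OF continuous] right left top
    by (simp add: H_def a1_def a2_def a3_def a4_def algebra_simps)
  finally show ?thesis
    unfolding J_def .
qed

lemma norm_contour_integral_exp_div_sin_pi_horizontal_le:
  assumes "-1 < c" "c < 0" "y \<noteq> 0"
  shows "norm (contour_integral (linepath (Complex c y) (Complex (c + 1) y)) (exp_div_sin_pi L))
           \<le> exp \<bar>L\<bar> / \<bar>sinh (pi * y)\<bar>"
proof -
  have segment: "closed_segment (Complex c y) (Complex (c + 1) y) = {z. Im z = y \<and> Re z \<in> {c..c + 1}}"
    by (simp add: closed_segment_same_Im closed_segment_eq_real_ivl)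
  have "continuous_on (closed_segment (Complex c y) (Complex (c + 1) y)) (exp_div_sin_pi L)"
    using assms
    by (intro holomorphic_on_imp_continuous_on holomorphic_on_subset[OF exp_div_sin_pi_holomorphic_on_strip])
       (auto simp: segment)
  then have "norm (contour_integral (linepath (Complex c y) (Complex (c + 1) y)) (exp_div_sin_pi L))
      \<le> exp \<bar>L\<bar> / \<bar>sinh (pi * y)\<bar> * norm (Complex (c + 1) y - Complex c y)"
  proof (intro contour_integral_bound_linepath contour_integrable_continuous_linepath)
    fix z assume "z \<in> closed_segment (Complex c y) (Complex (c + 1) y)"
    then show "norm (exp_div_sin_pi L z) \<le> exp \<bar>L\<bar> / \<bar>sinh (pi * y)\<bar>"
      using assms norm_exp_div_sin_pi_horizontal_le[of "Re z" "Im z" L]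
      by (auto simp: segment)
  qed (auto intro: divide_nonneg_nonneg)
  moreover have "Complex (c + 1) y - Complex c y = 1"
    by (simp add: complex_eq_iff)
  ultimately show ?thesis
    by simp
qed

lemma tendsto_integral_symmetric_interval:
  fixes g :: "real \<Rightarrow> 'a::euclidean_space"
  assumes "integrable lborel g"
  shows "((\<lambda>R. integral {-R..R} g) \<longlongrightarrow> (\<integral>t. g t \<partial>lborel)) at_top"
proof -
  have "((\<lambda>R. \<integral>t. indicator {-R..R} t *\<^sub>R g t \<partial>lborel) \<longlongrightarrow> (\<integral>t. g t \<partial>lborel)) at_top"
  proof (rule integral_dominated_convergence_at_top[where w = "\<lambda>t. norm (g t)"])
    show "AE t in lborel. ((\<lambda>R. indicator {-R..R} t *\<^sub>R g t) \<longlongrightarrow> g t) at_top"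
    proof (rule AE_I2)
      fix t :: real
      have "\<forall>\<^sub>F R in at_top. indicator {-R..R} t *\<^sub>R g t = g t"
        using eventually_ge_at_top[of "\<bar>t\<bar>"] by eventually_elim (auto simp: indicator_def)
      then show "((\<lambda>R. indicator {-R..R} t *\<^sub>R g t) \<longlongrightarrow> g t) at_top"
        by (rule tendsto_eventually)
    qed
    show "\<forall>\<^sub>F R in at_top. AE t in lborel. norm (indicator {-R..R} t *\<^sub>R g t) \<le> norm (g t)"
      by (intro always_eventually allI AE_I2) (auto simp: indicator_def)
  qed (use assms in auto)
  moreover have "(\<integral>t. indicator {-R..R} t *\<^sub>R g t \<partial>lborel) = integral {-R..R} g" for R
    using set_borel_integral_eq_integral(2)[of "{-R..R}" g] assms
    by (simp add: set_lebesgue_integral_def set_integrable_def integrable_mult_indicator)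
  ultimately show ?thesis
    by simp
qed

lemma tendsto_contour_integral_exp_div_sin_pi_horizontal:
  fixes c L :: real
  assumes "-1 < c" "c < 0"
  defines "H y \<equiv> contour_integral (linepath (Complex c y) (Complex (c + 1) y)) (exp_div_sin_pi L)"
  shows "(H \<longlongrightarrow> 0) at_top" "((\<lambda>R. H (-R)) \<longlongrightarrow> 0) at_top"
proof -
  have H_le: "norm (H y) \<le> exp \<bar>L\<bar> / sinh (pi * R)" if "0 < R" "\<bar>y\<bar> = R" for y R
  proof -
    have "\<bar>sinh (pi * y)\<bar> = sinh \<bar>pi * y\<bar>"
      by simp
    also have "\<bar>pi * y\<bar> = pi * R"
      using that by (simp add: abs_mult)
    finally have "\<bar>sinh (pi * y)\<bar> = sinh (pi * R)" .
    then show ?thesis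
      using norm_contour_integral_exp_div_sin_pi_horizontal_le[OF assms(1,2), of y L] that
      by (auto simp: H_def)
  qed
  have decay: "((\<lambda>R. exp \<bar>L\<bar> / sinh (pi * R)) \<longlongrightarrow> 0) at_top"
    by real_asymp
  show "(H \<longlongrightarrow> 0) at_top" "((\<lambda>R. H (-R)) \<longlongrightarrow> 0) at_top"
    by (rule Lim_null_comparison[OF _ decay],
        use eventually_gt_at_top[of 0] in \<open>eventually_elim, simp add: H_le\<close>)+
qed

theorem integral_exp_div_sin_pi_vertical_line:
  assumes "-1 < c" "c < 0"
  shows "(\<integral>t. exp_div_sin_pi L (Complex c t) \<partial>lborel) = - 2 / (1 + of_real (exp L))"
proof -
  define g where "g = (\<lambda>t. exp_div_sin_pi L (Complex c t))"
  define H where "H = (\<lambda>y. contour_integral (linepath (Complex c y) (Complex (c + 1) y)) (exp_div_sin_pi L))"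
  define D where "D = \<i> * (1 + of_real (exp L) :: complex)"
  have "0 < Re (1 + of_real (exp L) :: complex)"
    by (simp add: add_pos_pos)
  then have "1 + of_real (exp L) \<noteq> (0::complex)"
    by (metis less_irrefl zero_complex.sel(1))
  then have "D \<noteq> 0"
    by (simp add: D_def)
  have lim_integral: "((\<lambda>R. integral {-R..R} g) \<longlongrightarrow> (\<integral>t. g t \<partial>lborel)) at_top"
    unfolding g_def using sin_pi_neq_0_of_strip[OF assms]
    by (intro tendsto_integral_symmetric_interval integrable_exp_div_sin_pi_vertical)
  have "(H \<longlongrightarrow> 0) at_top" "((\<lambda>R. H (-R)) \<longlongrightarrow> 0) at_top"
    unfolding H_def by (rule tendsto_contour_integral_exp_div_sin_pi_horizontal[OF assms])+
  then have "((\<lambda>R. (H (-R) - H R - 2 * \<i>) / D) \<longlongrightarrow> (0 - 0 - 2 * \<i>) / D) at_top"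
    by (intro tendsto_intros \<open>D \<noteq> 0\<close>)
  moreover have "\<forall>\<^sub>F R in at_top. (H (-R) - H R - 2 * \<i>) / D = integral {-R..R} g"
    using eventually_gt_at_top[of 0]
  proof eventually_elim
    case (elim R)
    show ?case
      using exp_div_sin_pi_rectpath_decomposition[OF assms elim, of L] \<open>D \<noteq> 0\<close>
      by (simp add: H_def D_def g_def field_simps)
  qed
  ultimately have "((\<lambda>R. integral {-R..R} g) \<longlongrightarrow> (0 - 0 - 2 * \<i>) / D) at_top"
    by (rule Lim_transform_eventually)
  with lim_integral have "(\<integral>t. g t \<partial>lborel) = (0 - 0 - 2 * \<i>) / D"
    by (intro tendsto_unique) simp_all
  also have "\<dots> = - 2 / (1 + of_real (exp L))"
    by (simp add: D_def)
  finally show ?thesis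
    unfolding g_def .
qed

section \<open>Euler's integral as a Bochner integral\<close>

lemma measurable_Complex [measurable]:
  assumes [measurable]: "f \<in> borel_measurable M" "g \<in> borel_measurable M"
  shows "(\<lambda>x. Complex (f x) (g x)) \<in> borel_measurable M"
  unfolding Complex_eq by measurable

(* Euler's integrand t^(z-1) e^(-t) on t > 0, with the power written through exp and ln so that
   the measurability prover handles it. *)
definition Gamma_integrand :: "complex \<Rightarrow> real \<Rightarrow> complex" where
  "Gamma_integrand z t = indicator {0<..} t *\<^sub>R (exp ((z - 1) * of_real (ln t)) / of_real (exp t))"

lemma Gamma_integrand_measurable [measurable]:
  assumes [measurable]: "f \<in> borel_measurable M" "g \<in> borel_measurable M"
  shows "(\<lambda>x. Gamma_integrand (f x) (g x)) \<in> borel_measurable M"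
  unfolding Gamma_integrand_def by measurable

lemma norm_Gamma_integrand: "norm (Gamma_integrand z t) = indicator {0<..} t * t powr (Re z - 1) / exp t"
  by (cases "0 < t") (auto simp: Gamma_integrand_def norm_divide powr_def)

lemma has_bochner_integral_Gamma_integrand:
  assumes "0 < Re z"
  shows "has_bochner_integral lborel (Gamma_integrand z) (Gamma z)"
proof -
  define f where "f = (\<lambda>t::real. of_real t powr (z - 1) / of_real (exp t))"
  have eq: "Gamma_integrand z = (\<lambda>t. indicator {0<..} t *\<^sub>R f t)"
    by (auto simp: Gamma_integrand_def f_def powr_def Ln_of_real indicator_def fun_eq_iff)
  have "(\<lambda>t. indicator {0<..} t *\<^sub>R f t) \<in> borel_measurable lborel"
    unfolding eq[symmetric] by measurable
  then have integrable: "set_integrable lborel {0<..} f"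
    using absolutely_integrable_Gamma_integral'[OF assms]
    by (simp add: set_integrable_def f_def integrable_completion)
  moreover have "(LINT t:{0<..}|lborel. f t) = Gamma z"
    using set_borel_integral_eq_integral(2)[OF integrable] integral_unique[OF Gamma_integral_complex'[OF assms]]
    by (simp add: f_def)
  ultimately show ?thesis
    unfolding eq set_integrable_def set_lebesgue_integral_def by (simp add: has_bochner_integral_iff)
qed

lemma integral_Gamma_integrand: "0 < Re z \<Longrightarrow> (\<integral>t. Gamma_integrand z t \<partial>lborel) = Gamma z"
  by (rule has_bochner_integral_integral_eq[OF has_bochner_integral_Gamma_integrand])

lemma integrable_norm_Gamma_integrand:
  "0 < Re z \<Longrightarrow> integrable lborel (\<lambda>t. norm (Gamma_integrand z t))"
  using has_bochner_integral_Gamma_integrand by (auto intro: integrable_norm simp: has_bochner_integral_iff)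

lemma norm_Gamma_le_integral_norm_Gamma_integrand:
  "0 < Re z \<Longrightarrow> norm (Gamma z) \<le> (\<integral>t. norm (Gamma_integrand z t) \<partial>lborel)"
  using integral_norm_bound[of lborel "Gamma_integrand z"] by (simp add: integral_Gamma_integrand)

lemma norm_Gamma_integrand_vertical_line:
  "norm (Gamma_integrand (a - Complex c t) u) = norm (Gamma_integrand (a - of_real c) u)"
  by (simp add: norm_Gamma_integrand)

lemma Gamma_vertical_line:
  assumes "c < Re a"
  shows "(\<lambda>t. Gamma (a - Complex c t)) \<in> borel_measurable borel"
    and "norm (Gamma (a - Complex c t)) \<le> (\<integral>u. norm (Gamma_integrand (a - of_real c) u) \<partial>lborel)"
proof -
  have Re_pos: "0 < Re (a - Complex c t)" for t
    using assms by simp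
  have "(\<lambda>t. Gamma (a - Complex c t)) = (\<lambda>t. \<integral>u. Gamma_integrand (a - Complex c t) u \<partial>lborel)"
    using Re_pos by (simp add: integral_Gamma_integrand)
  then show "(\<lambda>t. Gamma (a - Complex c t)) \<in> borel_measurable borel"
    by simp measurable
  show "norm (Gamma (a - Complex c t)) \<le> (\<integral>u. norm (Gamma_integrand (a - of_real c) u) \<partial>lborel)"
    using norm_Gamma_le_integral_norm_Gamma_integrand[OF Re_pos] by (simp add: norm_Gamma_integrand_vertical_line)
qed

lemma integrable_norm_mult_bounded:
  fixes f g :: "'a \<Rightarrow> complex"
  assumes "integrable M f" "\<And>x. norm (g x) \<le> K" "g \<in> borel_measurable M"
  shows "integrable M (\<lambda>x. norm (f x * g x))"
proof (rule Bochner_Integration.integrable_bound)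
  show "integrable M (\<lambda>x. K * norm (f x))"
    using assms(1) by (intro integrable_mult_right integrable_norm)
  show "(\<lambda>x. norm (f x * g x)) \<in> borel_measurable M"
    using assms(1,3) by measurable
  have "0 \<le> K"
    using assms(2) norm_ge_zero order_trans by blast
  then show "AE x in M. norm (norm (f x * g x)) \<le> norm (K * norm (f x))"
    using assms(2) by (intro AE_I2) (simp add: norm_mult mult_left_mono mult.commute[of K])
qed

lemma integral_mult_integral_swap:
  fixes A :: "real \<Rightarrow> complex" and k :: "real \<Rightarrow> real \<Rightarrow> complex" and bound :: "real \<Rightarrow> real"
  assumes [measurable]: "A \<in> borel_measurable borel" "(\<lambda>(t, u). k u t) \<in> borel_measurable (lborel \<Otimes>\<^sub>M lborel)"
    and "integrable lborel (\<lambda>t. norm (A t))" "integrable lborel bound" "\<And>u t. norm (k u t) \<le> bound u"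
  shows "(\<integral>t. A t * (\<integral>u. k u t \<partial>lborel) \<partial>lborel) = (\<integral>u. (\<integral>t. A t * k u t \<partial>lborel) \<partial>lborel)"
proof -
  have [measurable]: "bound \<in> borel_measurable borel"
    using assms(4) by auto
  have bound_nonneg: "0 \<le> bound u" for u
    using assms(5) norm_ge_zero order_trans by blast
  have "integrable (lborel \<Otimes>\<^sub>M lborel) (\<lambda>(t, u). norm (A t) * bound u)"
    using assms(3,4) by (intro lborel_pair.Fubini_integrable) (auto simp: abs_mult)
  then have "integrable (lborel \<Otimes>\<^sub>M lborel) (\<lambda>(t, u). A t * k u t)"
  proof (rule Bochner_Integration.integrable_bound)
    show "AE p in lborel \<Otimes>\<^sub>M lborel. norm ((\<lambda>(t, u). A t * k u t) p) \<le> norm ((\<lambda>(t, u). norm (A t) * bound u) p)"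
      using assms(5) bound_nonneg by (intro AE_I2) (simp add: norm_mult abs_mult split_beta' mult_left_mono)
  qed measurable
  then show ?thesis
    using lborel_pair.Fubini_integral[of "\<lambda>t u. A t * k u t"] by (simp add: split_beta')
qed

lemma integral_mult_Gamma_vertical_line:
  fixes A :: "real \<Rightarrow> complex"
  assumes [measurable]: "A \<in> borel_measurable borel"
    and "integrable lborel (\<lambda>t. norm (A t))" "c < Re a"
  shows "(\<integral>t. A t * Gamma (a - Complex c t) \<partial>lborel)
           = (\<integral>u. (\<integral>t. A t * Gamma_integrand (a - Complex c t) u \<partial>lborel) \<partial>lborel)"
proof -
  have "(\<integral>t. A t * Gamma (a - Complex c t) \<partial>lborel)
      = (\<integral>t. A t * (\<integral>u. Gamma_integrand (a - Complex c t) u \<partial>lborel) \<partial>lborel)"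
    using assms(3) by (simp add: integral_Gamma_integrand)
  also have "\<dots> = (\<integral>u. (\<integral>t. A t * Gamma_integrand (a - Complex c t) u \<partial>lborel) \<partial>lborel)"
    using assms(2,3)
    by (intro integral_mult_integral_swap[where bound = "\<lambda>u. norm (Gamma_integrand (a - of_real c) u)"])
       (simp_all add: integrable_norm_Gamma_integrand norm_Gamma_integrand_vertical_line)
  finally show ?thesis .
qed

section \<open>The Mellin-Barnes integral of G^{3,1}_{1,3}\<close>

lemma meijerG_integrand_3_1_eq:
  assumes "0 < x"
  shows "meijerG_integrand 3 1 [0] [0, 0, 1] x s
           = - of_real pi * exp_div_sin_pi (ln x) s * Gamma (- s) * Gamma (1 - s)"
proof -
  have "Gamma (- s) * Gamma (1 + s) = - of_real pi / sin (of_real pi * s)"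
    using Gamma_reflection_complex[of "- s"] by simp
  moreover have "meijerG_integrand 3 1 [0] [0, 0, 1] x s
      = Gamma (- s) * Gamma (1 + s) * of_real x powr s * Gamma (- s) * Gamma (1 - s)"
    by (simp add: meijerG_integrand_def numeral_3_eq_3 lessThan_Suc mult_ac)
  ultimately show ?thesis
    using assms by (simp add: exp_div_sin_pi_def powr_def Ln_of_real mult_ac)
qed

lemma separating_line_3_1_iff: "separating_line c 3 1 [0] [0, 0, 1] \<longleftrightarrow> -1 < c \<and> c < 0"
  by (auto simp: separating_line_def less_Suc_eq numeral_3_eq_3)

lemma meijerG_3_1_eq_meijerG_line:
  obtains c where "-1 < c" "c < 0"
    and "meijerG 3 1 [0] [0, 0, 1] x = meijerG_line c 3 1 [0] [0, 0, 1] x"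
proof -
  define c where "c = (SOME c. separating_line c 3 1 [0] [0, 0, 1])"
  have "separating_line c 3 1 [0] [0, 0, 1]"
    unfolding c_def by (rule someI[of _ "-1/2"], rule separating_line_3_1_iff[THEN iffD2]) simp
  then have "-1 < c" "c < 0"
    unfolding separating_line_3_1_iff by auto
  moreover have "meijerG 3 1 [0] [0, 0, 1] x = meijerG_line c 3 1 [0] [0, 0, 1] x"
    unfolding meijerG_def c_def ..
  ultimately show thesis
    by (rule that)
qed

(* 2 pi times the line integral left over once both Gamma factors are expanded
   (integral_exp_div_sin_pi_mult_Gamma_integrands); it is also what E ln(1 + X Y / x) becomes
   after one integration by parts. *)
definition log_rate_kernel :: "real \<Rightarrow> real \<Rightarrow> real \<Rightarrow> real" where
  "log_rate_kernel x u v =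
     indicator {0<..} u * indicator {0<..} v * exp (- u) * exp (- v) * v / (u * v + x)"

lemma exp_div_sin_pi_mult_Gamma_integrands:
  assumes "0 < x" "0 < u" "0 < v"
  shows "- of_real pi * exp_div_sin_pi (ln x) s * Gamma_integrand (1 - s) v * Gamma_integrand (- s) u
           = of_real (- pi * exp (- u) * exp (- v) / u) * exp_div_sin_pi (ln (x / (u * v))) s"
proof -
  have v: "Gamma_integrand (1 - s) v = exp (- s * of_real (ln v)) * of_real (exp (- v))"
    using assms by (simp add: Gamma_integrand_def exp_minus divide_inverse)
  have "exp ((- s - 1) * of_real (ln u)) = exp (- s * of_real (ln u)) * of_real (1 / u)"
    using assms by (simp add: algebra_simps exp_diff exp_of_real divide_inverse)
  then have u: "Gamma_integrand (- s) u = exp (- s * of_real (ln u)) * of_real (exp (- u) / u)"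
    using assms by (simp add: Gamma_integrand_def exp_minus divide_inverse)
  have exponents: "exp (s * of_real (ln x)) * exp (- s * of_real (ln v)) * exp (- s * of_real (ln u))
      = exp (s * of_real (ln (x / (u * v))))"
    using assms by (simp add: mult_exp_exp ln_div ln_mult algebra_simps)
  show ?thesis
    unfolding exp_div_sin_pi_def u v exponents[symmetric] by (simp add: divide_inverse mult_ac)
qed

lemma integral_exp_div_sin_pi_mult_Gamma_integrands:
  assumes "-1 < c" "c < 0" "0 < x"
  shows "(\<integral>t. - of_real pi * exp_div_sin_pi (ln x) (Complex c t)
              * Gamma_integrand (1 - Complex c t) v * Gamma_integrand (- Complex c t) u \<partial>lborel)
           = of_real (2 * pi * log_rate_kernel x u v)"
proof (cases "0 < u \<and> 0 < v")
  case True
  define K where "K = - pi * exp (- u) * exp (- v) / u"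
  have "(\<integral>t. - of_real pi * exp_div_sin_pi (ln x) (Complex c t)
              * Gamma_integrand (1 - Complex c t) v * Gamma_integrand (- Complex c t) u \<partial>lborel)
      = of_real K * (\<integral>t. exp_div_sin_pi (ln (x / (u * v))) (Complex c t) \<partial>lborel)"
  proof -
    have "(\<lambda>t. - of_real pi * exp_div_sin_pi (ln x) (Complex c t)
              * Gamma_integrand (1 - Complex c t) v * Gamma_integrand (- Complex c t) u)
        = (\<lambda>t. of_real K * exp_div_sin_pi (ln (x / (u * v))) (Complex c t))"
      unfolding K_def using assms True by (intro ext exp_div_sin_pi_mult_Gamma_integrands) auto
    then show ?thesis
      by (simp only: integral_mult_right_zero)
  qed
  also have "\<dots> = of_real (K * (- 2 / (1 + x / (u * v))))"
    using assms True by (simp add: integral_exp_div_sin_pi_vertical_line)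
  also have "K * (- 2 / (1 + x / (u * v))) = 2 * pi * log_rate_kernel x u v"
    using assms True by (simp add: K_def log_rate_kernel_def field_simps)
  finally show ?thesis .
next
  case False
  then show ?thesis
    by (auto simp: Gamma_integrand_def log_rate_kernel_def)
qed

lemma integral_meijerG_integrand_3_1:
  assumes "-1 < c" "c < 0" "0 < x"
  shows "(\<integral>t. meijerG_integrand 3 1 [0] [0, 0, 1] x (Complex c t) \<partial>lborel)
           = of_real (2 * pi * (\<integral>v. (\<integral>u. log_rate_kernel x u v \<partial>lborel) \<partial>lborel))"
proof -
  define P where "P = (\<lambda>t. - of_real pi * exp_div_sin_pi (ln x) (Complex c t))"
  note sin_c = sin_pi_neq_0_of_strip[OF assms(1,2)]
  have [measurable]: "(\<lambda>t. exp_div_sin_pi (ln x) (Complex c t)) \<in> borel_measurable borel"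
    by (rule borel_measurable_continuous_onI[OF continuous_on_exp_div_sin_pi_vertical[OF sin_c]])
  then have [measurable]: "P \<in> borel_measurable borel"
    unfolding P_def by measurable
  have "integrable lborel P"
    unfolding P_def using integrable_exp_div_sin_pi_vertical[OF sin_c] by simp
  have [measurable]: "(\<lambda>t. Gamma (- Complex c t)) \<in> borel_measurable borel"
    and Gamma_le: "norm (Gamma (- Complex c t)) \<le> (\<integral>u. norm (Gamma_integrand (- of_real c) u) \<partial>lborel)"
    for t using Gamma_vertical_line[of c 0] assms by simp_all
  have "(\<integral>t. meijerG_integrand 3 1 [0] [0, 0, 1] x (Complex c t) \<partial>lborel)
      = (\<integral>t. (P t * Gamma (- Complex c t)) * Gamma (1 - Complex c t) \<partial>lborel)"
    unfolding meijerG_integrand_3_1_eq[OF assms(3)] P_def ..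
  also have "\<dots> = (\<integral>v. (\<integral>t. (P t * Gamma_integrand (1 - Complex c t) v) * Gamma (- Complex c t) \<partial>lborel) \<partial>lborel)"
    using assms integrable_norm_mult_bounded[OF \<open>integrable lborel P\<close> Gamma_le]
    by (subst integral_mult_Gamma_vertical_line) (simp_all add: mult_ac)
  also have "\<dots> = (\<integral>v. (\<integral>u. (\<integral>t. (P t * Gamma_integrand (1 - Complex c t) v)
                        * Gamma_integrand (- Complex c t) u \<partial>lborel) \<partial>lborel) \<partial>lborel)"
  proof (rule Bochner_Integration.integral_cong[OF refl])
    fix v
    have "integrable lborel (\<lambda>t. norm (P t * Gamma_integrand (1 - Complex c t) v))"
      by (rule integrable_norm_mult_bounded[OF \<open>integrable lborel P\<close>,
            where K = "norm (Gamma_integrand (1 - of_real c) v)"])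
         (simp add: norm_Gamma_integrand_vertical_line, measurable)
    then show "(\<integral>t. (P t * Gamma_integrand (1 - Complex c t) v) * Gamma (- Complex c t) \<partial>lborel)
        = (\<integral>u. (\<integral>t. (P t * Gamma_integrand (1 - Complex c t) v) * Gamma_integrand (- Complex c t) u
                  \<partial>lborel) \<partial>lborel)"
      using assms integral_mult_Gamma_vertical_line[of "\<lambda>t. P t * Gamma_integrand (1 - Complex c t) v" c 0]
      by simp
  qed
  also have "\<dots> = (\<integral>v. (\<integral>u. of_real (2 * pi * log_rate_kernel x u v) \<partial>lborel) \<partial>lborel)"
    unfolding P_def integral_exp_div_sin_pi_mult_Gamma_integrands[OF assms] ..
  finally show ?thesis
    by simp
qed

lemma meijerG_3_1_eq_double_integral:
  assumes "0 < x"
  shows "meijerG 3 1 [0] [0, 0, 1] x = of_real (\<integral>v. (\<integral>u. log_rate_kernel x u v \<partial>lborel) \<partial>lborel)"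
proof -
  obtain c where c: "-1 < c" "c < 0"
    and line: "meijerG 3 1 [0] [0, 0, 1] x = meijerG_line c 3 1 [0] [0, 0, 1] x"
    by (rule meijerG_3_1_eq_meijerG_line)
  show ?thesis
    unfolding line meijerG_line_def integral_meijerG_integrand_3_1[OF c assms]
    by (simp only: of_real_mult[symmetric]) simp
qed

section \<open>The expected logarithm of 1 + X Y / x\<close>

lemma ln_one_plus_mult_eq_nn_integral:
  assumes "0 \<le> a" "0 < x" "0 \<le> b"
  shows "ennreal (ln (1 + a * b / x)) = (\<integral>\<^sup>+w. ennreal (indicator {0..b} w * (a / (x + a * w))) \<partial>lborel)"
proof -
  have "((\<lambda>w. a / (x + a * w)) has_integral (ln (1 + a * b / x) - ln (1 + a * 0 / x))) {0..b}"
  proof (rule fundamental_theorem_of_calculus[OF assms(3)])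
    fix w assume w: "w \<in> {0..b}"
    have "0 < 1 + a * w / x"
      using assms w by (auto intro: add_pos_nonneg)
    then have "((\<lambda>w. ln (1 + a * w / x)) has_real_derivative (a / x) / (1 + a * w / x)) (at w within {0..b})"
      using assms by (auto intro!: derivative_eq_intros)
    moreover have "(a / x) / (1 + a * w / x) = a / (x + a * w)"
      using assms by (simp add: field_simps)
    ultimately have "((\<lambda>w. ln (1 + a * w / x)) has_real_derivative a / (x + a * w)) (at w within {0..b})"
      by metis
    then show "((\<lambda>w. ln (1 + a * w / x)) has_vector_derivative a / (x + a * w)) (at w within {0..b})"
      by (rule has_real_derivative_iff_has_vector_derivative[THEN iffD1])
  qed
  then have "integral\<^sup>N lborel (\<lambda>w. indicator {0..b} w * (a / (x + a * w))) = ln (1 + a * b / x)"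
    using assms by (intro nn_integral_has_integral_lebesgue) auto
  then show ?thesis
    by simp
qed

lemma nn_integral_exponential_density_tail:
  assumes "0 \<le> w"
  shows "(\<integral>\<^sup>+b. exponential_density 1 b * indicator {w..} b \<partial>lborel) = exp (- w)"
proof -
  have "(\<integral>\<^sup>+b. ennreal (exp (- b)) * indicator {w..} b \<partial>lborel) = ennreal (0 - (- exp (- w)))"
  proof (rule nn_integral_FTC_atLeast)
    show "((\<lambda>b::real. - exp (- b)) \<longlongrightarrow> 0) at_top"
      by real_asymp
  qed (auto intro!: derivative_eq_intros)
  moreover have "exponential_density 1 b * indicator {w..} b = ennreal (exp (- b)) * indicator {w..} b" for b
    using assms by (auto simp: exponential_density_def indicator_def)
  ultimately show ?thesis
    by simp
qed

lemma nn_integral_exponential_density_primitive: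
  fixes f :: "real \<Rightarrow> ennreal"
  assumes [measurable]: "f \<in> borel_measurable borel"
  shows "(\<integral>\<^sup>+b. exponential_density 1 b * (\<integral>\<^sup>+w. f w * indicator {0..b} w \<partial>lborel) \<partial>lborel)
           = (\<integral>\<^sup>+w. exponential_density 1 w * f w \<partial>lborel)"
proof -
  have "(\<integral>\<^sup>+b. exponential_density 1 b * (\<integral>\<^sup>+w. f w * indicator {0..b} w \<partial>lborel) \<partial>lborel)
      = (\<integral>\<^sup>+b. (\<integral>\<^sup>+w. exponential_density 1 b * (f w * indicator {0..b} w) \<partial>lborel) \<partial>lborel)"
    by (simp add: nn_integral_cmult)
  also have "\<dots> = (\<integral>\<^sup>+w. (\<integral>\<^sup>+b. exponential_density 1 b * (f w * indicator {0..b} w) \<partial>lborel) \<partial>lborel)"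
    by (rule lborel_pair.Fubini') (unfold indicator_def atLeastAtMost_iff, measurable)
  also have "\<dots> = (\<integral>\<^sup>+w. exponential_density 1 w * f w \<partial>lborel)"
  proof (rule nn_integral_cong)
    fix w :: real
    show "(\<integral>\<^sup>+b. exponential_density 1 b * (f w * indicator {0..b} w) \<partial>lborel) = exponential_density 1 w * f w"
    proof (cases "0 \<le> w")
      case True
      have "(\<integral>\<^sup>+b. exponential_density 1 b * (f w * indicator {0..b} w) \<partial>lborel)
          = (\<integral>\<^sup>+b. f w * (exponential_density 1 b * indicator {w..} b) \<partial>lborel)"
        using True by (intro nn_integral_cong) (auto simp: indicator_def mult.commute)
      also have "\<dots> = f w * exp (- w)"
        using True by (simp add: nn_integral_cmult nn_integral_exponential_density_tail)
      finally show ?thesis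
        using True by (simp add: exponential_density_def mult.commute)
    qed (simp add: exponential_density_def)
  qed
  finally show ?thesis .
qed

lemma nn_integral_exponential_density_ln:
  assumes "0 \<le> a" "0 < x"
  shows "(\<integral>\<^sup>+b. exponential_density 1 b * ennreal (ln (1 + a * b / x)) \<partial>lborel)
           = (\<integral>\<^sup>+w. exponential_density 1 w * ennreal (a / (x + a * w)) \<partial>lborel)"
proof -
  have "(\<integral>\<^sup>+b. exponential_density 1 b * ennreal (ln (1 + a * b / x)) \<partial>lborel)
      = (\<integral>\<^sup>+b. exponential_density 1 b * (\<integral>\<^sup>+w. ennreal (a / (x + a * w)) * indicator {0..b} w \<partial>lborel) \<partial>lborel)"
  proof (rule nn_integral_cong)
    fix b :: real
    show "exponential_density 1 b * ennreal (ln (1 + a * b / x))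
        = exponential_density 1 b * (\<integral>\<^sup>+w. ennreal (a / (x + a * w)) * indicator {0..b} w \<partial>lborel)"
    proof (cases "0 \<le> b")
      case True
      then show ?thesis
        using ln_one_plus_mult_eq_nn_integral[OF assms True]
        by (simp add: indicator_mult_ennreal mult.commute)
    qed (simp add: exponential_density_def)
  qed
  also have "\<dots> = (\<integral>\<^sup>+w. exponential_density 1 w * ennreal (a / (x + a * w)) \<partial>lborel)"
    by (rule nn_integral_exponential_density_primitive) measurable
  finally show ?thesis .
qed

lemma log_rate_kernel_nonneg: "0 < x \<Longrightarrow> 0 \<le> log_rate_kernel x u v"
  by (auto simp: log_rate_kernel_def indicator_def intro!: divide_nonneg_pos add_pos_nonneg)

lemma integrable_log_rate_kernel:
  assumes "0 < x"
  shows "integrable lborel (\<lambda>u. log_rate_kernel x u v)"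
proof (rule Bochner_Integration.integrable_bound)
  show "integrable lborel (\<lambda>u. \<bar>v\<bar> * exp (- v) / x * (indicator {0<..} u *\<^sub>R exp (- (u * 1))))"
    using integrable_I0i_exp_mscale[of 1] unfolding set_integrable_def by (intro integrable_mult_right) simp
  show "AE u in lborel. norm (log_rate_kernel x u v)
          \<le> norm (\<bar>v\<bar> * exp (- v) / x * (indicator {0<..} u *\<^sub>R exp (- (u * 1))))"
  proof (intro AE_I2)
    fix u
    show "norm (log_rate_kernel x u v)
          \<le> norm (\<bar>v\<bar> * exp (- v) / x * (indicator {0<..} u *\<^sub>R exp (- (u * 1))))"
    proof (cases "0 < u \<and> 0 < v")
      case True
      then have "norm (log_rate_kernel x u v) = exp (- v) * exp (- u) * (v / (u * v + x))"
        using assms by (simp add: log_rate_kernel_def abs_of_pos add_pos_pos mult_ac)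
      also have "\<dots> \<le> exp (- v) * exp (- u) * (v / x)"
        using True assms by (intro mult_left_mono divide_left_mono) (auto intro!: add_pos_pos mult_pos_pos)
      also have "\<dots> = norm (\<bar>v\<bar> * exp (- v) / x * (indicator {0<..} u *\<^sub>R exp (- (u * 1))))"
        using True assms by simp
      finally show ?thesis .
    next
      case False
      then have "log_rate_kernel x u v = 0"
        by (auto simp: log_rate_kernel_def)
      then show ?thesis
        by simp
    qed
  qed
qed (simp add: log_rate_kernel_def)

lemma nn_integral_log_rate_kernel:
  assumes "0 < x"
  shows "(\<integral>\<^sup>+u. log_rate_kernel x u v \<partial>lborel)
           = exponential_density 1 v * (\<integral>\<^sup>+w. exponential_density 1 w * ennreal (v / (x + v * w)) \<partial>lborel)"
proof (cases "0 < v")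
  case True
  have pointwise: "ennreal (exponential_density 1 v) * (exponential_density 1 w * ennreal (v / (x + v * w)))
      = log_rate_kernel x w v" if "w \<noteq> 0" for w
  proof (cases "0 < w")
    case True
    have "ennreal (exponential_density 1 v) * (exponential_density 1 w * ennreal (v / (x + v * w)))
        = ennreal (exp (- v)) * (ennreal (exp (- w)) * ennreal (v / (x + v * w)))"
      using True \<open>0 < v\<close> by (simp add: exponential_density_def)
    also have "\<dots> = ennreal (exp (- v) * (exp (- w) * (v / (x + v * w))))"
      by (simp only: ennreal_mult' exp_ge_zero)
    also have "exp (- v) * (exp (- w) * (v / (x + v * w))) = log_rate_kernel x w v"
      using True \<open>0 < v\<close> by (simp add: log_rate_kernel_def field_simps)
    finally show ?thesis .
  next
    case False
    with that show ?thesis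
      by (simp add: exponential_density_def log_rate_kernel_def)
  qed
  have "exponential_density 1 v * (\<integral>\<^sup>+w. exponential_density 1 w * ennreal (v / (x + v * w)) \<partial>lborel)
      = (\<integral>\<^sup>+w. ennreal (exponential_density 1 v) * (exponential_density 1 w * ennreal (v / (x + v * w))) \<partial>lborel)"
    by (rule nn_integral_cmult[symmetric]) simp
  also have "\<dots> = (\<integral>\<^sup>+u. log_rate_kernel x u v \<partial>lborel)"
    using AE_lborel_singleton[of 0] by (intro nn_integral_cong_AE, eventually_elim) (simp add: pointwise)
  finally show ?thesis ..
next
  case False
  then show ?thesis
    by (auto simp: log_rate_kernel_def exponential_density_def)
qed

lemma double_integral_log_rate_kernel:
  assumes "0 < x"
  shows "(\<integral>v. (\<integral>u. log_rate_kernel x u v \<partial>lborel) \<partial>lborel)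
           = enn2real (\<integral>\<^sup>+v. (\<integral>\<^sup>+u. log_rate_kernel x u v \<partial>lborel) \<partial>lborel)"
proof -
  have inner: "(\<integral>\<^sup>+u. log_rate_kernel x u v \<partial>lborel) = ennreal (\<integral>u. log_rate_kernel x u v \<partial>lborel)" for v
    using integrable_log_rate_kernel log_rate_kernel_nonneg assms by (intro nn_integral_eq_integral) auto
  have "(\<lambda>v. \<integral>u. log_rate_kernel x u v \<partial>lborel) \<in> borel_measurable lborel"
    unfolding log_rate_kernel_def by measurable
  then show ?thesis
    unfolding inner using log_rate_kernel_nonneg[OF assms]
    by (intro integral_eq_nn_integral) (auto intro: integral_nonneg_AE)
qed

lemma (in prob_space) expectation_ln_one_plus_mult_exponential:
  assumes "indep_var lborel X lborel Y"
    and "distributed M lborel X (exponential_density 1)" "distributed M lborel Y (exponential_density 1)"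
    and "\<And>\<omega>. 0 \<le> X \<omega>" "\<And>\<omega>. 0 \<le> Y \<omega>" "0 < x"
  shows "(\<integral>\<omega>. ln (1 + X \<omega> * Y \<omega> / x) \<partial>M) = (\<integral>v. (\<integral>u. log_rate_kernel x u v \<partial>lborel) \<partial>lborel)"
proof -
  define g where "g = (\<lambda>(a, b). ennreal (ln (1 + a * b / x)))"
  have [measurable]: "g \<in> borel_measurable (lborel \<Otimes>\<^sub>M lborel)"
    unfolding g_def by measurable
  have [measurable]: "X \<in> borel_measurable M" "Y \<in> borel_measurable M"
    using assms(2,3) by (auto dest: distributed_measurable)
  have joint: "distributed M (lborel \<Otimes>\<^sub>M lborel) (\<lambda>\<omega>. (X \<omega>, Y \<omega>))
                 (\<lambda>(a, b). ennreal (exponential_density 1 a) * ennreal (exponential_density 1 b))"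
    using assms(1-3) by (intro distributed_joint_indep) (simp_all add: lborel.sigma_finite_measure_axioms)
  have "(\<integral>\<omega>. ln (1 + X \<omega> * Y \<omega> / x) \<partial>M) = enn2real (\<integral>\<^sup>+\<omega>. g (X \<omega>, Y \<omega>) \<partial>M)"
    using assms(4-6) by (subst integral_eq_nn_integral) (auto simp: g_def)
  also have "(\<integral>\<^sup>+\<omega>. g (X \<omega>, Y \<omega>) \<partial>M)
      = (\<integral>\<^sup>+a. (\<integral>\<^sup>+b. ennreal (exponential_density 1 a) * ennreal (exponential_density 1 b) * g (a, b)
                       \<partial>lborel) \<partial>lborel)"
    by (simp add: distributed_nn_integral[OF joint, symmetric] lborel.nn_integral_fst[symmetric]
                  split_beta')
  also have "\<dots> = (\<integral>\<^sup>+a. exponential_density 1 a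
                       * (\<integral>\<^sup>+b. exponential_density 1 b * ennreal (ln (1 + a * b / x)) \<partial>lborel) \<partial>lborel)"
    by (simp add: nn_integral_cmult g_def mult.assoc)
  also have "\<dots> = (\<integral>\<^sup>+v. (\<integral>\<^sup>+u. log_rate_kernel x u v \<partial>lborel) \<partial>lborel)"
  proof (rule nn_integral_cong)
    fix a :: real
    show "exponential_density 1 a * (\<integral>\<^sup>+b. exponential_density 1 b * ennreal (ln (1 + a * b / x)) \<partial>lborel)
        = (\<integral>\<^sup>+u. log_rate_kernel x u a \<partial>lborel)"
    proof (cases "0 \<le> a")
      case True
      then show ?thesis
        by (simp add: nn_integral_exponential_density_ln[OF True assms(6)] nn_integral_log_rate_kernel[OF assms(6)])
    qed (simp add: exponential_density_def log_rate_kernel_def)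
  qed
  finally show ?thesis
    using double_integral_log_rate_kernel[OF assms(6)] by simp
qed

theorem corollary2:
  fixes M :: "'a measure" and h_rd h_ru :: "'a \<Rightarrow> complex"
    and \<delta> T \<Xi> d_t \<alpha>_r R_est :: real
  assumes "prob_space M"
    and "h_rd \<in> borel_measurable M" and "h_ru \<in> borel_measurable M"
    and "prob_space.indep_var M borel h_rd borel h_ru"
    and "distributed M lborel (\<lambda>\<omega>. (cmod (h_rd \<omega>))^2) (exponential_density 1)"
    and "distributed M lborel (\<lambda>\<omega>. (cmod (h_ru \<omega>))^2) (exponential_density 1)"
    and "0 < \<delta>" and "0 < T" and "0 < \<Xi>" and "0 < d_t" and "0 < \<alpha>_r"
    and "R_est = \<delta> / (2 * T) *
           (\<integral>\<omega>. log 2 (1 + \<Xi> * d_t powr (- \<alpha>_r) * ((cmod (h_rd \<omega>))^2 * (cmod (h_ru \<omega>))^2)) \<partial>M)"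
  shows "complex_of_real R_est =
           complex_of_real (\<delta> / (2 * T * ln 2)) *
           meijerG 3 1 [0] [0, 0, 1] (d_t powr \<alpha>_r * inverse \<Xi>)"
proof -
  interpret prob_space M
    by fact
  define x where "x = d_t powr \<alpha>_r * inverse \<Xi>"
  define X Y where "X = (\<lambda>\<omega>. (cmod (h_rd \<omega>))\<^sup>2)" and "Y = (\<lambda>\<omega>. (cmod (h_ru \<omega>))\<^sup>2)"
  have "0 < x"
    using assms(9,10) by (simp add: x_def)
  have "indep_var lborel X lborel Y"
    using indep_var_compose[OF assms(4), of "\<lambda>z. (cmod z)\<^sup>2" lborel "\<lambda>z. (cmod z)\<^sup>2" lborel]
    by (simp add: X_def Y_def comp_def)
  then have expectation: "(\<integral>\<omega>. ln (1 + X \<omega> * Y \<omega> / x) \<partial>M) = (\<integral>v. (\<integral>u. log_rate_kernel x u v \<partial>lborel) \<partial>lborel)"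
    using assms(5,6) \<open>0 < x\<close> by (intro expectation_ln_one_plus_mult_exponential) (auto simp: X_def Y_def)
  have "\<Xi> * d_t powr (- \<alpha>_r) = 1 / x"
    using assms(9,10) by (simp add: x_def powr_minus field_simps)
  then have "R_est = \<delta> / (2 * T) * (\<integral>\<omega>. ln (1 + X \<omega> * Y \<omega> / x) / ln 2 \<partial>M)"
    using assms(12) by (simp add: X_def Y_def log_def)
  then show ?thesis
    using meijerG_3_1_eq_double_integral[OF \<open>0 < x\<close>] expectation by (simp add: x_def)
qed

end
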